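(* Let $\mathscr{D}_1=\{C_{3,1},C_{3,2},C_{3,3},C_{4,1},C_{4,2},C_{4,3},C_{5,1},C_{5,2},C_{5,3}\}$ and $\mathscr{D}_2=\{C_3,C_4,C_5\}$. Let $\mathscr{F}$ be the family of all graphs $G$ obtained as follows: take a single vertex $v$, graphs $A_1,\dots,A_t\in\mathscr{D}_1$ and graphs $B_1,\dots,B_s\in\mathscr{D}_2$, where $s,t\geq 0$ and $s+t\geq 2$ (all these graphs vertex-disjoint), and identify the leaf of each $A_i$ and one vertex of each $B_j$ with $v$. Let $G_4$ be the graph in $\mathscr{F}$ obtained with one gadget $C_4$ and one gadget $C_{4,1}$ (explicitly: vertices $a,a_1,a_2,a_3,b_1,b_2,b_3,b_4$ and edges $aa_1,aa_2,aa_3,a_2b_4,a_3b_4,a_1b_1,b_1b_2,b_2b_3,b_3a_1$), and let $G_5$ be the graph in $\mathscr{F}$ obtained with one gadget $C_4$ and one gadget $C_5$. If $G\in\mathscr{F}\setminus\{G_4,G_5\}$, then $\gamma^{d}_2(G)\leq \frac{|V(G)|}{3}$.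
   Context: All graphs are finite and simple. A set $S$ of vertices of a graph $G$ is a disjunctive dominating set of $G$ if every vertex not in $S$ is adjacent to a vertex of $S$ or has at least two vertices of $S$ at distance exactly $2$ from it in $G$. The disjunctive domination number $\gamma^{d}_2(G)$ is the minimum cardinality of a disjunctive dominating set of $G$. $C_n$ denotes the cycle on $n$ vertices. For $s\geq 3$ and $t\geq 1$, $C_{s,t}$ denotes the graph obtained from a cycle $C_s$ and a path with $t$ edges by identifying one end vertex of the path with a vertex of the cycle; the other end vertex of the path (a vertex of degree $1$) is called the leaf of $C_{s,t}$. Thus $C_{s,t}$ has $s+t$ vertices. *)

theory Defs
  imports Complex_Main
begin

definition dist2 :: "'a set \<Rightarrow> ('a \<Rightarrow> 'a \<Rightarrow> bool) \<Rightarrow> 'a \<Rightarrow> 'a \<Rightarrow> bool" where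
  "dist2 V E u w \<longleftrightarrow> u \<noteq> w \<and> \<not> E u w \<and> (\<exists>z\<in>V. E u z \<and> E z w)"

definition disj_dom :: "'a set \<Rightarrow> ('a \<Rightarrow> 'a \<Rightarrow> bool) \<Rightarrow> 'a set \<Rightarrow> bool" where
  "disj_dom V E S \<longleftrightarrow> S \<subseteq> V \<and>
     (\<forall>u\<in>V - S. (\<exists>w\<in>S. E u w) \<or> card {w\<in>S. dist2 V E u w} \<ge> 2)"

definition gamma_d2 :: "'a set \<Rightarrow> ('a \<Rightarrow> 'a \<Rightarrow> bool) \<Rightarrow> nat" where
  "gamma_d2 V E = Min {card S | S. disj_dom V E S}"

definition graph_iso :: "'a set \<Rightarrow> ('a \<Rightarrow> 'a \<Rightarrow> bool) \<Rightarrow> 'b set \<Rightarrow> ('b \<Rightarrow> 'b \<Rightarrow> bool) \<Rightarrow> bool" where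
  "graph_iso V E V' E' \<longleftrightarrow> (\<exists>f. bij_betw f V V' \<and> (\<forall>x\<in>V. \<forall>y\<in>V. E x y \<longleftrightarrow> E' (f x) (f y)))"

datatype gadget = Cyc nat | Pend nat nat  \<comment> \<open>Cyc s = C_s, Pend s t = C_{s,t}\<close>

text \<open>Local vertex sets: C_s on 0..s-1 (cycle i ~ i+1 mod s); C_{s,t} on 0..s+t-1, cycle on
 0..s-1, path 0 - s - s+1 - ... - s+t-1 with t edges, leaf s+t-1.\<close>
fun gverts :: "gadget \<Rightarrow> nat set" where
  "gverts (Cyc s) = {..<s}"
| "gverts (Pend s t) = {..<s+t}"

definition cyc_edge :: "nat \<Rightarrow> nat \<Rightarrow> nat \<Rightarrow> bool" where
  "cyc_edge s j k \<longleftrightarrow> j < s \<and> k < s \<and> (k = (j + 1) mod s \<or> j = (k + 1) mod s)"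

definition pathv :: "nat \<Rightarrow> nat \<Rightarrow> nat" where
  "pathv s m = (if m = 0 then 0 else s + m - 1)"

fun gedge :: "gadget \<Rightarrow> nat \<Rightarrow> nat \<Rightarrow> bool" where
  "gedge (Cyc s) j k = cyc_edge s j k"
| "gedge (Pend s t) j k = (cyc_edge s j k \<or>
     (\<exists>m<t. (j = pathv s m \<and> k = pathv s (m+1)) \<or> (k = pathv s m \<and> j = pathv s (m+1))))"

text \<open>Vertex identified with the common vertex v: any vertex (0) of C_s, the leaf of C_{s,t}.\<close>
fun gattach :: "gadget \<Rightarrow> nat" where
  "gattach (Cyc s) = 0"
| "gattach (Pend s t) = s + t - 1"

definition D1 :: "gadget set" where
  "D1 = {Pend s t | s t. s \<in> {3,4,5} \<and> t \<in> {1,2,3}}"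

definition D2 :: "gadget set" where
  "D2 = {Cyc s | s. s \<in> {3,4,5}}"

section \<open>The glued graph: None is the common vertex v, Some (i,j) is local vertex j of gadget i\<close>

definition emb :: "gadget list \<Rightarrow> nat \<Rightarrow> nat \<Rightarrow> (nat \<times> nat) option" where
  "emb gs i j = (if j = gattach (gs ! i) then None else Some (i, j))"

definition famV :: "gadget list \<Rightarrow> (nat \<times> nat) option set" where
  "famV gs = insert None {emb gs i j | i j. i < length gs \<and> j \<in> gverts (gs ! i)}"

definition famE :: "gadget list \<Rightarrow> (nat \<times> nat) option \<Rightarrow> (nat \<times> nat) option \<Rightarrow> bool" where
  "famE gs x y \<longleftrightarrow> (\<exists>i<length gs. \<exists>j k. j \<in> gverts (gs ! i) \<and> k \<in> gverts (gs ! i) \<and>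
      gedge (gs ! i) j k \<and> x = emb gs i j \<and> y = emb gs i k)"

definition in_famF :: "'a set \<Rightarrow> ('a \<Rightarrow> 'a \<Rightarrow> bool) \<Rightarrow> bool" where
  "in_famF V E \<longleftrightarrow> (\<exists>gs. length gs \<ge> 2 \<and> set gs \<subseteq> D1 \<union> D2 \<and> graph_iso V E (famV gs) (famE gs))"

definition G4V where "G4V = famV [Cyc 4, Pend 4 1]"
definition G4E where "G4E = famE [Cyc 4, Pend 4 1]"
definition G5V where "G5V = famV [Cyc 4, Cyc 5]"
definition G5E where "G5E = famE [Cyc 4, Cyc 5]"

end

theory Submission
  imports Defs
begin

(* Every vertex of G other than the common vertex v (the centre) lies in exactly one gadget, so
   |V(G)| = 1 + (sum over the gadgets H of |V(H)| - 1).  In each gadget we select at most a third of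
   its vertices other than v so that, together with v (if selected) and the selected neighbours of v in
   the other gadgets, they dominate the gadget disjunctively; distance-two witnesses may lie beyond v.
   Selecting v and one such set per gadget works as soon as the selections leave a total slack of at
   least 2 against |V(G)|/3.  Otherwise every gadget is C_{3,1}, C_{4,3}, C_{5,2} or C_4, except for at
   most one C_{3,2}, C_{5,3}, C_{4,1} or C_5, and selections avoiding v suffice: v is dominated by a
   selected neighbour or by two selected vertices at distance two.  A C_4, C_{4,1} or C_5 then relies on
   a selected neighbour of v in another gadget, and G_4 and G_5 are exactly the graphs without one. *)

section \<open>Disjunctive domination inside a gadget\<close>

definition gdist2 :: "gadget \<Rightarrow> nat \<Rightarrow> nat \<Rightarrow> bool" where
  "gdist2 g j k \<longleftrightarrow> j \<noteq> k \<and> \<not> gedge g j k \<and> (\<exists>z\<in>gverts g. gedge g j z \<and> gedge g z k)"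

(* c: the centre v is selected; h: another gadget contains a selected neighbour of v, which is then at
   distance two from every neighbour of v in g. *)
definition gadget_dominated :: "gadget \<Rightarrow> nat list \<Rightarrow> bool \<Rightarrow> bool \<Rightarrow> nat \<Rightarrow> bool" where
  "gadget_dominated g L c h j \<longleftrightarrow> j \<in> set L \<or> (\<exists>k\<in>set L. gedge g j k) \<or> (c \<and> gedge g j (gattach g)) \<or>
     2 \<le> length (filter (gdist2 g j) L) + of_bool (c \<and> gdist2 g j (gattach g))
         + of_bool (h \<and> gedge g j (gattach g))"

definition local_dom :: "gadget \<Rightarrow> nat list \<Rightarrow> bool \<Rightarrow> bool \<Rightarrow> bool" where
  "local_dom g L c h \<longleftrightarrow> distinct L \<and> set L \<subseteq> gverts g - {gattach g} \<and>
     (\<forall>j\<in>gverts g - {gattach g}. gadget_dominated g L c h j)"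

definition centre_nbr_selected :: "gadget \<Rightarrow> nat list \<Rightarrow> bool" where
  "centre_nbr_selected g L \<longleftrightarrow> (\<exists>k\<in>set L. gedge g (gattach g) k)"

definition centre_dist2_selected :: "gadget \<Rightarrow> nat list \<Rightarrow> bool" where
  "centre_dist2_selected g L \<longleftrightarrow> (\<exists>k\<in>set L. gdist2 g (gattach g) k)"

definition gsize :: "gadget \<Rightarrow> nat" where
  "gsize g = card (gverts g - {gattach g})"

definition slack :: "gadget \<Rightarrow> nat list \<Rightarrow> nat" where
  "slack g L = gsize g - 3 * length L"

definition wf_gadget :: "gadget \<Rightarrow> bool" where
  "wf_gadget g \<longleftrightarrow> gattach g \<in> gverts g \<and> (\<forall>j k. gedge g j k \<longrightarrow> j \<in> gverts g \<and> k \<in> gverts g)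
     \<and> (\<forall>j. \<not> gedge g j j)"

lemma cyc_edge_iff:
  assumes "3 \<le> s"
  shows "cyc_edge s j k \<longleftrightarrow> j < s \<and> k < s \<and> (k = j + 1 \<or> j = k + 1 \<or> (j = 0 \<and> k = s - 1) \<or> (k = 0 \<and> j = s - 1))"
proof -
  have "Suc x mod s = (if Suc x < s then Suc x else 0)" if "x < s" for x
    using that by (metis Suc_lessI mod_less mod_self)
  then show ?thesis
    using assms by (cases "j < s \<and> k < s") (auto simp: cyc_edge_def split: if_splits)
qed

lemma pendant_path_iff:
  assumes "0 < s"
  shows "(\<exists>m<t. (j = pathv s m \<and> k = pathv s (m+1)) \<or> (k = pathv s m \<and> j = pathv s (m+1))) \<longleftrightarrow>
    0 < t \<and> ((j = 0 \<and> k = s) \<or> (s \<le> j \<and> k = j + 1 \<and> k < s + t) \<or> (k = 0 \<and> j = s) \<or> (s \<le> k \<and> j = k + 1 \<and> j < s + t))"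
    (is "?path \<longleftrightarrow> ?explicit")
proof
  assume ?path
  then obtain m where "m < t" "(j = pathv s m \<and> k = pathv s (m+1)) \<or> (k = pathv s m \<and> j = pathv s (m+1))"
    by blast
  then show ?explicit
    using assms by (cases "m = 0") (auto simp: pathv_def)
next
  assume ?explicit
  then consider "0 < t" "j = 0 \<and> k = s \<or> k = 0 \<and> j = s" | "s \<le> j" "k = j + 1" "k < s + t"
    | "s \<le> k" "j = k + 1" "j < s + t"
    by blast
  then show ?path
  proof cases
    case 1
    then show ?thesis using assms by (intro exI[of _ 0]) (auto simp: pathv_def)
  next
    case 2
    then show ?thesis using assms by (intro exI[of _ "j + 1 - s"]) (auto simp: pathv_def)
  next
    case 3
    then show ?thesis using assms by (intro exI[of _ "k + 1 - s"]) (auto simp: pathv_def)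
  qed
qed

lemma gedge_Cyc_iff:
  "3 \<le> s \<Longrightarrow> gedge (Cyc s) j k \<longleftrightarrow>
    j < s \<and> k < s \<and> (k = j + 1 \<or> j = k + 1 \<or> (j = 0 \<and> k = s - 1) \<or> (k = 0 \<and> j = s - 1))"
  by (simp add: cyc_edge_iff)

lemma gedge_Pend_iff:
  "3 \<le> s \<Longrightarrow> gedge (Pend s t) j k \<longleftrightarrow>
    (j < s \<and> k < s \<and> (k = j + 1 \<or> j = k + 1 \<or> (j = 0 \<and> k = s - 1) \<or> (k = 0 \<and> j = s - 1))) \<or>
    (0 < t \<and> ((j = 0 \<and> k = s) \<or> (s \<le> j \<and> k = j + 1 \<and> k < s + t) \<or> (k = 0 \<and> j = s) \<or> (s \<le> k \<and> j = k + 1 \<and> j < s + t)))"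
  by (simp only: gedge.simps cyc_edge_iff pendant_path_iff)

lemmas gadget_eval_simps = gedge_Cyc_iff gedge_Pend_iff gdist2_def gadget_dominated_def local_dom_def
  centre_nbr_selected_def centre_dist2_selected_def slack_def gsize_def
  lessThan_nat_numeral lessThan_Suc insert_Diff_if

declare gedge.simps [simp del]

lemma D1_D2_cases:
  assumes "g \<in> D1 \<union> D2"
  obtains "g = Pend 3 1" | "g = Pend 3 2" | "g = Pend 3 3" | "g = Pend 4 1" | "g = Pend 4 2" | "g = Pend 4 3"
    | "g = Pend 5 1" | "g = Pend 5 2" | "g = Pend 5 3" | "g = Cyc 3" | "g = Cyc 4" | "g = Cyc 5"
  using assms unfolding D1_def D2_def by auto

lemma wf_gadget_D1_D2: "g \<in> D1 \<union> D2 \<Longrightarrow> wf_gadget g"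
  by (erule D1_D2_cases) (auto simp: wf_gadget_def gedge_Cyc_iff gedge_Pend_iff)

definition sel_centre :: "gadget \<Rightarrow> nat list" where
  "sel_centre g = (if g = Pend 3 1 then [0] else if g = Pend 3 2 then [0] else if g = Pend 3 3 then [0]
    else if g = Pend 4 1 then [1] else if g = Pend 4 2 then [2] else if g = Pend 4 3 then [0,1]
    else if g = Pend 5 1 then [2] else if g = Pend 5 2 then [0,1] else if g = Pend 5 3 then [0,1]
    else if g = Cyc 4 then [1] else if g = Cyc 5 then [1] else [])"

definition sel_no_centre :: "gadget \<Rightarrow> nat list" where
  "sel_no_centre g = (if g = Pend 3 1 then [0] else if g = Pend 4 3 then [2,5] else if g = Pend 5 2 then [2,5]
    else if g = Cyc 4 then [2] else if g = Pend 3 2 then [0] else if g = Pend 5 3 then [2,5] else [])"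

definition sel_helped :: "gadget \<Rightarrow> nat list" where
  "sel_helped g = (if g = Cyc 4 then [1] else if g = Pend 4 1 then [2] else if g = Cyc 5 then [2]
    else sel_no_centre g)"

lemma local_dom_sel_centre:
  "g \<in> D1 \<union> D2 \<Longrightarrow> local_dom g (sel_centre g) True False \<and> 3 * length (sel_centre g) \<le> gsize g"
  by (erule D1_D2_cases) (simp_all add: sel_centre_def gadget_eval_simps)

lemma small_slack_sel_centre:
  assumes "g \<in> D1 \<union> D2" "slack g (sel_centre g) \<le> 1"
  shows "g \<in> {Pend 3 1, Pend 4 3, Pend 5 2, Cyc 4} \<and> slack g (sel_centre g) = 0
    \<or> g \<in> {Pend 3 2, Pend 5 3, Pend 4 1, Cyc 5} \<and> slack g (sel_centre g) = 1"
  using assms by (elim D1_D2_cases) (simp_all add: sel_centre_def gadget_eval_simps)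

lemma local_dom_sel_no_centre:
  "g \<in> {Pend 3 1, Pend 4 3, Pend 5 2, Cyc 4, Pend 3 2, Pend 5 3} \<Longrightarrow>
    local_dom g (sel_no_centre g) False False \<and> 3 * length (sel_no_centre g) \<le> gsize g"
  by (elim insertE emptyE) (simp_all add: sel_no_centre_def gadget_eval_simps)

lemma centre_nbr_selected_no_centre:
  "g \<in> {Pend 3 1, Pend 4 3, Pend 5 2} \<Longrightarrow> centre_nbr_selected g (sel_no_centre g)"
  by (elim insertE emptyE) (simp_all add: sel_no_centre_def gadget_eval_simps)

lemma centre_dist2_selected_no_centre:
  "g \<in> {Cyc 4, Pend 3 2, Pend 5 3} \<Longrightarrow> centre_dist2_selected g (sel_no_centre g)"
  by (elim insertE emptyE) (simp_all add: sel_no_centre_def gadget_eval_simps)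

lemma local_dom_sel_helped:
  "g \<in> {Pend 3 1, Pend 4 3, Pend 5 2, Cyc 4, Pend 3 2, Pend 5 3, Pend 4 1, Cyc 5} \<Longrightarrow>
    local_dom g (sel_helped g) False (g \<in> {Pend 4 1, Cyc 5, Cyc 4}) \<and> 3 * length (sel_helped g) \<le> gsize g"
  by (elim insertE emptyE) (simp_all add: sel_helped_def sel_no_centre_def gadget_eval_simps)

lemma centre_nbr_selected_helped:
  "g \<in> {Pend 3 1, Pend 4 3, Pend 5 2, Cyc 4} \<Longrightarrow> centre_nbr_selected g (sel_helped g)"
  by (elim insertE emptyE) (simp_all add: sel_helped_def sel_no_centre_def gadget_eval_simps)

section \<open>Disjunctive domination of the glued graph\<close>

lemma finite_gverts [simp]: "finite (gverts g)"
  by (cases g) auto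

lemma famV_iff:
  "x \<in> famV gs \<longleftrightarrow> x = None \<or> (\<exists>i j. x = Some (i, j) \<and> i < length gs \<and> j \<in> gverts (gs!i) \<and> j \<noteq> gattach (gs!i))"
  unfolding famV_def emb_def by (cases x) force+

lemma famV_eq: "famV gs = insert None (Some ` (SIGMA i:{..<length gs}. gverts (gs!i) - {gattach (gs!i)}))"
  by (auto simp: famV_iff)

lemma finite_famV: "finite (famV gs)"
  by (simp add: famV_eq)

lemma card_famV: "card (famV gs) = 1 + (\<Sum>i<length gs. gsize (gs!i))"
proof -
  let ?X = "SIGMA i:{..<length gs}. gverts (gs!i) - {gattach (gs!i)}"
  have "card (famV gs) = Suc (card (Some ` ?X))"
    unfolding famV_eq by (rule card_insert_disjoint) auto
  also have "card (Some ` ?X) = card ?X"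
    by (simp add: card_image)
  also have "card ?X = (\<Sum>i<length gs. gsize (gs!i))"
    unfolding gsize_def by (rule card_SigmaI) auto
  finally show ?thesis by simp
qed

lemma famE_Some_Some:
  "famE gs (Some (i, j)) (Some (i', k)) \<longleftrightarrow> i' = i \<and> i < length gs \<and> j \<in> gverts (gs!i) \<and> k \<in> gverts (gs!i)
    \<and> j \<noteq> gattach (gs!i) \<and> k \<noteq> gattach (gs!i) \<and> gedge (gs!i) j k"
  unfolding famE_def emb_def by auto

lemma famE_Some_None:
  "wf_gadget (gs!i) \<Longrightarrow> famE gs (Some (i, j)) None \<longleftrightarrow>
    i < length gs \<and> j \<in> gverts (gs!i) \<and> j \<noteq> gattach (gs!i) \<and> gedge (gs!i) j (gattach (gs!i))"
  unfolding famE_def emb_def wf_gadget_def by (auto split: if_splits)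

lemma famE_None_Some:
  "wf_gadget (gs!i) \<Longrightarrow> famE gs None (Some (i, k)) \<longleftrightarrow>
    i < length gs \<and> k \<in> gverts (gs!i) \<and> k \<noteq> gattach (gs!i) \<and> gedge (gs!i) (gattach (gs!i)) k"
  unfolding famE_def emb_def wf_gadget_def by (auto split: if_splits)

lemma famE_None_None: "\<forall>g\<in>set gs. wf_gadget g \<Longrightarrow> \<not> famE gs None None"
  unfolding famE_def emb_def wf_gadget_def by (auto split: if_splits)

context
  fixes gs :: "gadget list" and i :: nat
  assumes wf: "wf_gadget (gs!i)" and i: "i < length gs"
begin

lemma dist2_within_gadget:
  assumes j: "j \<in> gverts (gs!i)" "j \<noteq> gattach (gs!i)" and k: "k \<in> gverts (gs!i)" "k \<noteq> gattach (gs!i)"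
    and jk: "gdist2 (gs!i) j k"
  shows "dist2 (famV gs) (famE gs) (Some (i, j)) (Some (i, k))"
proof -
  obtain z where z: "z \<in> gverts (gs!i)" "gedge (gs!i) j z" "gedge (gs!i) z k"
    using jk unfolding gdist2_def by blast
  show ?thesis
  proof (cases "z = gattach (gs!i)")
    case True
    then show ?thesis
      using wf i j k z jk unfolding dist2_def gdist2_def
      by (intro conjI bexI[of _ None]) (auto simp: famE_Some_Some famE_Some_None famE_None_Some famV_iff)
  next
    case False
    then show ?thesis
      using wf i j k z jk unfolding dist2_def gdist2_def
      by (intro conjI bexI[of _ "Some (i, z)"]) (auto simp: famE_Some_Some famV_iff)
  qed
qed

lemma dist2_to_centre:
  assumes j: "j \<in> gverts (gs!i)" "j \<noteq> gattach (gs!i)" and jv: "gdist2 (gs!i) j (gattach (gs!i))"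
  shows "dist2 (famV gs) (famE gs) (Some (i, j)) None"
proof -
  obtain z where z: "z \<in> gverts (gs!i)" "gedge (gs!i) j z" "gedge (gs!i) z (gattach (gs!i))"
    using jv unfolding gdist2_def by blast
  then have "z \<noteq> gattach (gs!i)"
    using wf unfolding wf_gadget_def by auto
  then show ?thesis
    using wf i j z jv unfolding dist2_def gdist2_def
    by (intro conjI bexI[of _ "Some (i, z)"]) (auto simp: famE_Some_Some famE_Some_None famV_iff)
qed

lemma dist2_from_centre:
  assumes k: "k \<in> gverts (gs!i)" "k \<noteq> gattach (gs!i)" and vk: "gdist2 (gs!i) (gattach (gs!i)) k"
  shows "dist2 (famV gs) (famE gs) None (Some (i, k))"
proof -
  obtain z where z: "z \<in> gverts (gs!i)" "gedge (gs!i) (gattach (gs!i)) z" "gedge (gs!i) z k"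
    using vk unfolding gdist2_def by blast
  then have "z \<noteq> gattach (gs!i)"
    using wf unfolding wf_gadget_def by auto
  then show ?thesis
    using wf i k z vk unfolding dist2_def gdist2_def
    by (intro conjI bexI[of _ "Some (i, z)"]) (auto simp: famE_Some_Some famE_None_Some famV_iff)
qed

end

lemma dist2_across_centre:
  assumes "wf_gadget (gs!i)" "wf_gadget (gs!i')" "i < length gs" "i' < length gs" "i \<noteq> i'"
    and "j \<in> gverts (gs!i)" "j \<noteq> gattach (gs!i)" "k \<in> gverts (gs!i')" "k \<noteq> gattach (gs!i')"
    and "gedge (gs!i) j (gattach (gs!i))" "gedge (gs!i') (gattach (gs!i')) k"
  shows "dist2 (famV gs) (famE gs) (Some (i, j)) (Some (i', k))"
  unfolding dist2_def using assms
  by (intro conjI bexI[of _ None]) (auto simp: famE_Some_Some famE_Some_None famE_None_Some famV_iff)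

definition glued_set :: "gadget list \<Rightarrow> (gadget \<Rightarrow> nat list) \<Rightarrow> bool \<Rightarrow> (nat \<times> nat) option set" where
  "glued_set gs sel c = (if c then {None} else {}) \<union> Some ` (SIGMA i:{..<length gs}. set (sel (gs!i)))"

lemma Some_in_glued_set_iff [simp]: "Some (i, k) \<in> glued_set gs sel c \<longleftrightarrow> i < length gs \<and> k \<in> set (sel (gs!i))"
  by (auto simp: glued_set_def)

lemma None_in_glued_set_iff [simp]: "None \<in> glued_set gs sel c \<longleftrightarrow> c"
  by (auto simp: glued_set_def)

lemma finite_glued_set [simp]: "finite (glued_set gs sel c)"
  by (simp add: glued_set_def)

lemma glued_set_subset_famV:
  "\<forall>i<length gs. set (sel (gs!i)) \<subseteq> gverts (gs!i) - {gattach (gs!i)} \<Longrightarrow> glued_set gs sel c \<subseteq> famV gs"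
  unfolding glued_set_def famV_eq by (intro Un_least image_mono Sigma_mono) auto

lemma card_glued_set:
  assumes "\<forall>i<length gs. distinct (sel (gs!i))"
  shows "card (glued_set gs sel c) = of_bool c + (\<Sum>i<length gs. length (sel (gs!i)))"
proof -
  let ?X = "SIGMA i:{..<length gs}. set (sel (gs!i))"
  have "card (Some ` ?X) = card ?X"
    by (simp add: card_image)
  also have "\<dots> = (\<Sum>i<length gs. length (sel (gs!i)))"
    using assms by (subst card_SigmaI) (auto intro!: sum.cong simp: distinct_card)
  finally show ?thesis
    by (cases c) (auto simp: glued_set_def)
qed

lemma glued_set_accounting:
  assumes "\<forall>i<length gs. distinct (sel (gs!i)) \<and> 3 * length (sel (gs!i)) \<le> gsize (gs!i)"
  shows "3 * card (glued_set gs sel c) + (\<Sum>i<length gs. slack (gs!i) (sel (gs!i))) + 1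
    = card (famV gs) + 3 * of_bool c"
proof -
  have "(\<Sum>i<length gs. gsize (gs!i)) = (\<Sum>i<length gs. slack (gs!i) (sel (gs!i)) + 3 * length (sel (gs!i)))"
    using assms by (intro sum.cong) (auto simp: slack_def)
  then show ?thesis
    using assms by (simp add: card_famV card_glued_set sum.distrib sum_distrib_left)
qed

lemma two_le_card_filter:
  assumes "finite A" "a \<in> A" "b \<in> A" "a \<noteq> b" "P a" "P b"
  shows "2 \<le> card {x\<in>A. P x}"
proof -
  have "card {a, b} \<le> card {x\<in>A. P x}"
    using assms by (intro card_mono) auto
  then show ?thesis
    using assms(4) by simp
qed

lemma glued_centre_dominated:
  assumes wf: "\<forall>g\<in>set gs. wf_gadget g"
    and sub: "\<forall>i<length gs. set (sel (gs!i)) \<subseteq> gverts (gs!i) - {gattach (gs!i)}"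
    and centre: "(\<exists>i<length gs. centre_nbr_selected (gs!i) (sel (gs!i))) \<or>
      (\<exists>i1<length gs. \<exists>i2<length gs. i1 \<noteq> i2 \<and>
         centre_dist2_selected (gs!i1) (sel (gs!i1)) \<and> centre_dist2_selected (gs!i2) (sel (gs!i2)))"
  shows "(\<exists>w\<in>glued_set gs sel c. famE gs None w) \<or>
    2 \<le> card {w\<in>glued_set gs sel c. dist2 (famV gs) (famE gs) None w}"
  using centre
proof
  assume "\<exists>i<length gs. centre_nbr_selected (gs!i) (sel (gs!i))"
  then obtain i k where "i < length gs" "k \<in> set (sel (gs!i))" "gedge (gs!i) (gattach (gs!i)) k"
    unfolding centre_nbr_selected_def by blast
  then have "Some (i, k) \<in> glued_set gs sel c" "famE gs None (Some (i, k))"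
    using wf sub by (auto simp: famE_None_Some)
  then show ?thesis by blast
next
  assume "\<exists>i1<length gs. \<exists>i2<length gs. i1 \<noteq> i2 \<and>
    centre_dist2_selected (gs!i1) (sel (gs!i1)) \<and> centre_dist2_selected (gs!i2) (sel (gs!i2))"
  then obtain i1 i2 k1 k2 where i: "i1 < length gs" "i2 < length gs" "i1 \<noteq> i2"
    and k: "k1 \<in> set (sel (gs!i1))" "gdist2 (gs!i1) (gattach (gs!i1)) k1"
      "k2 \<in> set (sel (gs!i2))" "gdist2 (gs!i2) (gattach (gs!i2)) k2"
    unfolding centre_dist2_selected_def by blast
  have "dist2 (famV gs) (famE gs) None (Some (i1, k1))" "dist2 (famV gs) (famE gs) None (Some (i2, k2))"
    using wf sub i k by (auto intro!: dist2_from_centre)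
  then show ?thesis
    using i k by (intro disjI2 two_le_card_filter[of _ "Some (i1, k1)" "Some (i2, k2)"]) auto
qed

lemma selected_across_centre:
  assumes wf: "\<forall>g\<in>set gs. wf_gadget g"
    and sel_sub: "\<forall>i<length gs. set (sel (gs!i)) \<subseteq> gverts (gs!i) - {gattach (gs!i)}"
    and i: "i < length gs" and j: "j \<in> gverts (gs!i)" "j \<noteq> gattach (gs!i)"
    and jv: "gedge (gs!i) j (gattach (gs!i))"
    and other: "\<exists>i'<length gs. i' \<noteq> i \<and> centre_nbr_selected (gs!i') (sel (gs!i'))"
  shows "\<exists>i' k. i' \<noteq> i \<and> Some (i', k) \<in> glued_set gs sel c
    \<and> dist2 (famV gs) (famE gs) (Some (i, j)) (Some (i', k))"
proof -
  obtain i' k where i': "i' < length gs" "i' \<noteq> i" and k: "k \<in> set (sel (gs!i'))"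
    "gedge (gs!i') (gattach (gs!i')) k"
    using other unfolding centre_nbr_selected_def by blast
  have "dist2 (famV gs) (famE gs) (Some (i, j)) (Some (i', k))"
    using wf sel_sub i i' j jv k by (intro dist2_across_centre) auto
  then show ?thesis
    using i' k by auto
qed

lemma card_glued_dist2_ge:
  assumes wf: "\<forall>g\<in>set gs. wf_gadget g"
    and loc: "\<forall>i<length gs. local_dom (gs!i) (sel (gs!i)) c (h i)"
    and helper: "\<forall>i<length gs. h i \<longrightarrow> (\<exists>i'<length gs. i' \<noteq> i \<and> centre_nbr_selected (gs!i') (sel (gs!i')))"
    and i: "i < length gs" and j: "j \<in> gverts (gs!i)" "j \<noteq> gattach (gs!i)"
  shows "length (filter (gdist2 (gs!i) j) (sel (gs!i))) + of_bool (c \<and> gdist2 (gs!i) j (gattach (gs!i)))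
      + of_bool (h i \<and> gedge (gs!i) j (gattach (gs!i)))
    \<le> card {w\<in>glued_set gs sel c. dist2 (famV gs) (famE gs) (Some (i, j)) w}"
    (is "length ?F + ?b + ?h \<le> card ?D")
proof -
  let ?g = "gs!i" and ?a = "gattach (gs!i)"
  have sel_sub: "\<forall>i<length gs. set (sel (gs!i)) \<subseteq> gverts (gs!i) - {gattach (gs!i)}"
    using loc unfolding local_dom_def by blast
  define A where "A = (\<lambda>k. Some (i, k)) ` set ?F"
  define B :: "(nat \<times> nat) option set" where "B = (if c \<and> gdist2 ?g j ?a then {None} else {})"
  define C where "C = {w\<in>?D. \<exists>i' k. w = Some (i', k) \<and> i' \<noteq> i}"
  have "A \<subseteq> ?D"
    using wf sel_sub i j unfolding A_def by (auto intro!: dist2_within_gadget)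
  moreover have "B \<subseteq> ?D"
    using wf i j unfolding B_def by (auto intro!: dist2_to_centre)
  moreover have "C \<subseteq> ?D"
    unfolding C_def by blast
  ultimately have "card (A \<union> B \<union> C) \<le> card ?D"
    by (intro card_mono) auto
  moreover have "card A = length ?F"
    using loc i distinct_card[of ?F] unfolding A_def local_dom_def by (simp add: card_image inj_on_def)
  moreover have "card B = ?b"
    unfolding B_def by simp
  moreover have "?h \<le> card C"
  proof (cases "h i \<and> gedge ?g j ?a")
    case True
    then have "C \<noteq> {}"
      using selected_across_centre[OF wf sel_sub i j, of c] helper i unfolding C_def by blast
    moreover have "finite C"
      unfolding C_def by simp
    ultimately show ?thesis
      by (simp add: Suc_leI card_gt_0_iff)
  qed auto
  moreover have "card (A \<union> B \<union> C) = card A + card B + card C"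
  proof -
    have "finite A" "finite B" "finite C" "A \<inter> B = {}" "(A \<union> B) \<inter> C = {}"
      unfolding A_def B_def C_def by auto
    then show ?thesis
      by (simp add: card_Un_disjoint)
  qed
  ultimately show ?thesis
    by linarith
qed

lemma glued_vertex_dominated:
  assumes wf: "\<forall>g\<in>set gs. wf_gadget g"
    and loc: "\<forall>i<length gs. local_dom (gs!i) (sel (gs!i)) c (h i)"
    and helper: "\<forall>i<length gs. h i \<longrightarrow> (\<exists>i'<length gs. i' \<noteq> i \<and> centre_nbr_selected (gs!i') (sel (gs!i')))"
    and u: "Some (i, j) \<in> famV gs - glued_set gs sel c"
  shows "(\<exists>w\<in>glued_set gs sel c. famE gs (Some (i, j)) w) \<or>
    2 \<le> card {w\<in>glued_set gs sel c. dist2 (famV gs) (famE gs) (Some (i, j)) w}"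
proof -
  let ?g = "gs!i" and ?L = "sel (gs!i)" and ?a = "gattach (gs!i)"
  have i: "i < length gs" and j: "j \<in> gverts ?g" "j \<noteq> ?a" and jL: "j \<notin> set ?L"
    using u by (auto simp: famV_iff)
  have "gadget_dominated ?g ?L c (h i) j"
    using loc i j unfolding local_dom_def by blast
  then consider (nbr) k where "k \<in> set ?L" "gedge ?g j k" | (centre) "c" "gedge ?g j ?a"
    | (count) "2 \<le> length (filter (gdist2 ?g j) ?L) + of_bool (c \<and> gdist2 ?g j ?a) + of_bool (h i \<and> gedge ?g j ?a)"
    using jL unfolding gadget_dominated_def by blast
  then show ?thesis
  proof cases
    case nbr
    then have "famE gs (Some (i, j)) (Some (i, k))"
      using loc i j unfolding local_dom_def by (auto simp: famE_Some_Some)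
    then show ?thesis
      using nbr i by auto
  next
    case centre
    then have "famE gs (Some (i, j)) None"
      using wf i j by (simp add: famE_Some_None)
    then show ?thesis
      using centre by auto
  next
    case count
    then show ?thesis
      using card_glued_dist2_ge[OF wf loc helper i j] by linarith
  qed
qed

lemma disj_dom_glued_set:
  assumes wf: "\<forall>g\<in>set gs. wf_gadget g"
    and loc: "\<forall>i<length gs. local_dom (gs!i) (sel (gs!i)) c (h i)"
    and helper: "\<forall>i<length gs. h i \<longrightarrow> (\<exists>i'<length gs. i' \<noteq> i \<and> centre_nbr_selected (gs!i') (sel (gs!i')))"
    and centre: "c \<or> (\<exists>i<length gs. centre_nbr_selected (gs!i) (sel (gs!i))) \<or>
      (\<exists>i1<length gs. \<exists>i2<length gs. i1 \<noteq> i2 \<and>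
         centre_dist2_selected (gs!i1) (sel (gs!i1)) \<and> centre_dist2_selected (gs!i2) (sel (gs!i2)))"
  shows "disj_dom (famV gs) (famE gs) (glued_set gs sel c)"
proof -
  let ?S = "glued_set gs sel c"
  have sel_sub: "\<forall>i<length gs. set (sel (gs!i)) \<subseteq> gverts (gs!i) - {gattach (gs!i)}"
    using loc unfolding local_dom_def by blast
  have "(\<exists>w\<in>?S. famE gs u w) \<or> 2 \<le> card {w\<in>?S. dist2 (famV gs) (famE gs) u w}"
    if u: "u \<in> famV gs - ?S" for u
  proof (cases u)
    case None
    then have "\<not> c"
      using u by simp
    then show ?thesis
      using glued_centre_dominated[OF wf sel_sub] centre None by blast
  next
    case (Some p)
    then show ?thesis
      using glued_vertex_dominated[OF wf loc helper] u by (cases p) simp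
  qed
  then show ?thesis
    unfolding disj_dom_def using glued_set_subset_famV[OF sel_sub] by blast
qed

lemma disj_dom_with_centre:
  assumes gs: "set gs \<subseteq> D1 \<union> D2" and slack: "2 \<le> (\<Sum>i<length gs. slack (gs!i) (sel_centre (gs!i)))"
  shows "\<exists>S. disj_dom (famV gs) (famE gs) S \<and> 3 * card S \<le> card (famV gs)"
proof -
  have wf: "\<forall>g\<in>set gs. wf_gadget g"
    using gs wf_gadget_D1_D2 by blast
  have loc: "\<forall>i<length gs. local_dom (gs!i) (sel_centre (gs!i)) True False
      \<and> 3 * length (sel_centre (gs!i)) \<le> gsize (gs!i)"
    using gs local_dom_sel_centre nth_mem by blast
  have "disj_dom (famV gs) (famE gs) (glued_set gs sel_centre True)"
    using wf loc by (intro disj_dom_glued_set[where h = "\<lambda>_. False"]) auto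
  moreover have "3 * card (glued_set gs sel_centre True) \<le> card (famV gs)"
    using glued_set_accounting[of gs sel_centre True] loc slack by (simp add: local_dom_def)
  ultimately show ?thesis by blast
qed

lemma disj_dom_no_centre:
  assumes len: "2 \<le> length gs" and gs: "set gs \<subseteq> {Pend 3 1, Pend 4 3, Pend 5 2, Cyc 4, Pend 3 2, Pend 5 3}"
  shows "\<exists>S. disj_dom (famV gs) (famE gs) S \<and> 3 * card S \<le> card (famV gs)"
proof -
  have gsi: "gs!i \<in> {Pend 3 1, Pend 4 3, Pend 5 2, Cyc 4, Pend 3 2, Pend 5 3}" if "i < length gs" for i
    using gs nth_mem that by blast
  have wf: "\<forall>g\<in>set gs. wf_gadget g"
    using gs by (auto intro!: wf_gadget_D1_D2 simp: D1_def D2_def)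
  have loc: "\<forall>i<length gs. local_dom (gs!i) (sel_no_centre (gs!i)) False False
      \<and> 3 * length (sel_no_centre (gs!i)) \<le> gsize (gs!i)"
    using gsi local_dom_sel_no_centre by blast
  have centre: "(\<exists>i<length gs. centre_nbr_selected (gs!i) (sel_no_centre (gs!i))) \<or>
      (\<exists>i1<length gs. \<exists>i2<length gs. i1 \<noteq> i2 \<and> centre_dist2_selected (gs!i1) (sel_no_centre (gs!i1))
         \<and> centre_dist2_selected (gs!i2) (sel_no_centre (gs!i2)))"
  proof (cases "\<exists>i<length gs. gs!i \<in> {Pend 3 1, Pend 4 3, Pend 5 2}")
    case True
    then show ?thesis
      using centre_nbr_selected_no_centre by blast
  next
    case False
    then have "centre_dist2_selected (gs!i) (sel_no_centre (gs!i))" if "i < length gs" for i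
      using gsi[OF that] that centre_dist2_selected_no_centre by auto
    moreover have "0 < length gs" "1 < length gs" "(0::nat) \<noteq> 1"
      using len by auto
    ultimately show ?thesis
      by blast
  qed
  have "disj_dom (famV gs) (famE gs) (glued_set gs sel_no_centre False)"
    using wf loc centre by (intro disj_dom_glued_set[where h = "\<lambda>_. False"]) auto
  moreover have "3 * card (glued_set gs sel_no_centre False) \<le> card (famV gs)"
    using glued_set_accounting[of gs sel_no_centre False] loc by (simp add: local_dom_def)
  ultimately show ?thesis by blast
qed

lemma length_2_exceptional:
  assumes "length gs = 2" "i < 2" "i0 < 2" "i \<noteq> i0" "gs!i = Cyc 4" "gs!i0 \<in> {Pend 4 1, Cyc 5}"
  shows "gs \<in> {[Cyc 4, Pend 4 1], [Pend 4 1, Cyc 4], [Cyc 4, Cyc 5], [Cyc 5, Cyc 4]}"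
proof -
  obtain a b where "gs = [a, b]"
    using assms(1) by (auto simp: length_Suc_conv numeral_2_eq_2)
  moreover have "i = 0 \<and> i0 = 1 \<or> i = 1 \<and> i0 = 0"
    using assms(2-4) by auto
  ultimately show ?thesis
    using assms(5,6) by auto
qed

lemma disj_dom_helped:
  assumes len: "2 \<le> length gs" and i0: "i0 < length gs" "gs!i0 \<in> {Pend 4 1, Cyc 5}"
    and others: "\<forall>i<length gs. i \<noteq> i0 \<longrightarrow> gs!i \<in> {Pend 3 1, Pend 4 3, Pend 5 2, Cyc 4}"
    and not_exceptional: "gs \<notin> {[Cyc 4, Pend 4 1], [Pend 4 1, Cyc 4], [Cyc 4, Cyc 5], [Cyc 5, Cyc 4]}"
  shows "\<exists>S. disj_dom (famV gs) (famE gs) S \<and> 3 * card S \<le> card (famV gs)"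
proof -
  let ?h = "\<lambda>i. gs!i \<in> {Pend 4 1, Cyc 5, Cyc 4}"
  have gsi: "gs!i \<in> {Pend 3 1, Pend 4 3, Pend 5 2, Cyc 4, Pend 3 2, Pend 5 3, Pend 4 1, Cyc 5}"
    if "i < length gs" for i
    using i0 others that by (cases "i = i0") auto
  have "set gs \<subseteq> {Pend 3 1, Pend 4 3, Pend 5 2, Cyc 4, Pend 3 2, Pend 5 3, Pend 4 1, Cyc 5}"
    using gsi by (metis in_set_conv_nth subsetI)
  then have wf: "\<forall>g\<in>set gs. wf_gadget g"
    by (auto intro!: wf_gadget_D1_D2 simp: D1_def D2_def)
  have loc: "\<forall>i<length gs. local_dom (gs!i) (sel_helped (gs!i)) False (?h i)
      \<and> 3 * length (sel_helped (gs!i)) \<le> gsize (gs!i)"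
    using gsi local_dom_sel_helped by blast
  have nbr: "centre_nbr_selected (gs!i) (sel_helped (gs!i))" if "i < length gs" "i \<noteq> i0" for i
    using others that centre_nbr_selected_helped by blast
  have helper: "\<exists>i'<length gs. i' \<noteq> i \<and> centre_nbr_selected (gs!i') (sel_helped (gs!i'))"
    if i: "i < length gs" "?h i" for i
  proof (cases "i = i0")
    case True
    have "\<exists>i'<length gs. i' \<noteq> i0"
      using len by presburger
    then show ?thesis
      using nbr True by blast
  next
    case False
    then have "gs!i = Cyc 4"
      using others i by auto
    then have "length gs \<noteq> 2"
      using length_2_exceptional[of gs i i0] i(1) i0 False not_exceptional by auto
    then have "\<exists>i'<length gs. i' \<noteq> i \<and> i' \<noteq> i0"
      using len by presburger
    then show ?thesis
      using nbr by blast
  qed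
  have centre: "\<exists>i<length gs. centre_nbr_selected (gs!i) (sel_helped (gs!i))"
    using helper[OF i0(1)] i0(2) by auto
  have "disj_dom (famV gs) (famE gs) (glued_set gs sel_helped False)"
    using wf loc helper centre by (intro disj_dom_glued_set[where h = ?h]) auto
  moreover have "3 * card (glued_set gs sel_helped False) \<le> card (famV gs)"
    using glued_set_accounting[of gs sel_helped False] loc by (simp add: local_dom_def)
  ultimately show ?thesis by blast
qed

lemma small_total_slack_cases:
  assumes gs: "set gs \<subseteq> D1 \<union> D2" and slack: "(\<Sum>i<length gs. slack (gs!i) (sel_centre (gs!i))) \<le> 1"
  obtains "set gs \<subseteq> {Pend 3 1, Pend 4 3, Pend 5 2, Cyc 4}"
    | i0 where "i0 < length gs" "gs!i0 \<in> {Pend 3 2, Pend 5 3, Pend 4 1, Cyc 5}"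
        "\<forall>i<length gs. i \<noteq> i0 \<longrightarrow> gs!i \<in> {Pend 3 1, Pend 4 3, Pend 5 2, Cyc 4}"
proof -
  let ?f = "\<lambda>i. slack (gs!i) (sel_centre (gs!i))"
  have slack_class: "gs!i \<in> {Pend 3 1, Pend 4 3, Pend 5 2, Cyc 4} \<and> ?f i = 0
      \<or> gs!i \<in> {Pend 3 2, Pend 5 3, Pend 4 1, Cyc 5} \<and> ?f i = 1" if "i < length gs" for i
  proof (rule small_slack_sel_centre)
    show "gs!i \<in> D1 \<union> D2"
      using gs nth_mem that by blast
    have "?f i \<le> (\<Sum>i<length gs. ?f i)"
      using that by (intro member_le_sum) auto
    then show "?f i \<le> 1"
      using slack by simp
  qed
  have at_most_one: "?f i = 0 \<or> ?f i' = 0" if "i < length gs" "i' < length gs" "i \<noteq> i'" for i i'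
  proof -
    have "(\<Sum>i\<in>{i, i'}. ?f i) \<le> (\<Sum>i<length gs. ?f i)"
      using that by (intro sum_mono2) auto
    then show ?thesis
      using slack that(3) by (simp; arith)
  qed
  show thesis
  proof (cases "\<exists>i0<length gs. gs!i0 \<in> {Pend 3 2, Pend 5 3, Pend 4 1, Cyc 5}")
    case True
    then obtain i0 where i0: "i0 < length gs" "gs!i0 \<in> {Pend 3 2, Pend 5 3, Pend 4 1, Cyc 5}"
      by blast
    have "gs!i \<in> {Pend 3 1, Pend 4 3, Pend 5 2, Cyc 4}" if "i < length gs" "i \<noteq> i0" for i
      using slack_class[OF that(1)] slack_class[OF i0(1)] at_most_one[OF that(1) i0(1) that(2)] i0(2) by auto
    then show thesis
      using that(2) i0 by blast
  next
    case False
    then have "set gs \<subseteq> {Pend 3 1, Pend 4 3, Pend 5 2, Cyc 4}"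
      using slack_class by (metis in_set_conv_nth subsetI)
    then show thesis
      using that(1) by blast
  qed
qed

lemma famV_disj_dom_card_le:
  assumes len: "2 \<le> length gs" and gs: "set gs \<subseteq> D1 \<union> D2"
    and not_exceptional: "gs \<notin> {[Cyc 4, Pend 4 1], [Pend 4 1, Cyc 4], [Cyc 4, Cyc 5], [Cyc 5, Cyc 4]}"
  shows "\<exists>S. disj_dom (famV gs) (famE gs) S \<and> 3 * card S \<le> card (famV gs)"
proof (cases "2 \<le> (\<Sum>i<length gs. slack (gs!i) (sel_centre (gs!i)))")
  case True
  then show ?thesis
    using disj_dom_with_centre gs by blast
next
  case False
  then have "(\<Sum>i<length gs. slack (gs!i) (sel_centre (gs!i))) \<le> 1"
    by simp
  then consider "set gs \<subseteq> {Pend 3 1, Pend 4 3, Pend 5 2, Cyc 4}"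
    | i0 where "i0 < length gs" "gs!i0 \<in> {Pend 3 2, Pend 5 3, Pend 4 1, Cyc 5}"
        "\<forall>i<length gs. i \<noteq> i0 \<longrightarrow> gs!i \<in> {Pend 3 1, Pend 4 3, Pend 5 2, Cyc 4}"
    by (rule small_total_slack_cases[OF gs])
  then show ?thesis
  proof cases
    case 1
    then have "set gs \<subseteq> {Pend 3 1, Pend 4 3, Pend 5 2, Cyc 4, Pend 3 2, Pend 5 3}"
      by auto
    then show ?thesis
      by (rule disj_dom_no_centre[OF len])
  next
    case (2 i0)
    show ?thesis
    proof (cases "gs!i0 \<in> {Pend 4 1, Cyc 5}")
      case True
      then show ?thesis
        using disj_dom_helped[OF len 2(1) True 2(3) not_exceptional] by blast
    next
      case False
      then have "gs!i \<in> {Pend 3 1, Pend 4 3, Pend 5 2, Cyc 4, Pend 3 2, Pend 5 3}" if "i < length gs" for i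
        using 2 that by (cases "i = i0") auto
      then have "set gs \<subseteq> {Pend 3 1, Pend 4 3, Pend 5 2, Cyc 4, Pend 3 2, Pend 5 3}"
        by (metis in_set_conv_nth subsetI)
      then show ?thesis
        by (rule disj_dom_no_centre[OF len])
    qed
  qed
qed

section \<open>Invariance under isomorphism\<close>

lemma graph_iso_trans:
  assumes "graph_iso A EA B EB" "graph_iso B EB C EC"
  shows "graph_iso A EA C EC"
proof -
  obtain f where f: "bij_betw f A B" "\<forall>x\<in>A. \<forall>y\<in>A. EA x y \<longleftrightarrow> EB (f x) (f y)"
    using assms(1) unfolding graph_iso_def by blast
  obtain g where g: "bij_betw g B C" "\<forall>x\<in>B. \<forall>y\<in>B. EB x y \<longleftrightarrow> EC (g x) (g y)"
    using assms(2) unfolding graph_iso_def by blast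
  have "bij_betw (g \<circ> f) A C"
    using f(1) g(1) by (rule bij_betw_trans)
  moreover have "\<forall>x\<in>A. \<forall>y\<in>A. EA x y \<longleftrightarrow> EC ((g \<circ> f) x) ((g \<circ> f) y)"
    using f g bij_betw_apply[OF f(1)] by simp
  ultimately show ?thesis
    unfolding graph_iso_def by blast
qed

lemma graph_iso_famV_swap:
  assumes "wf_gadget a" "wf_gadget b"
  shows "graph_iso (famV [a, b]) (famE [a, b]) (famV [b, a]) (famE [b, a])"
proof -
  define \<sigma> :: "(nat \<times> nat) option \<Rightarrow> (nat \<times> nat) option" where "\<sigma> = map_option (apfst (\<lambda>i. 1 - i))"
  have swap: "[b, a] ! (1 - i) = [a, b] ! i" "[a, b] ! (1 - i) = [b, a] ! i" if "i < 2" for i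
    using that by (auto simp: less_2_cases_iff)
  have "\<sigma> (\<sigma> x) = x" if "x \<in> famV [a, b] \<or> x \<in> famV [b, a]" for x
    using that by (auto simp: famV_iff \<sigma>_def)
  moreover have "\<sigma> ` famV [a, b] \<subseteq> famV [b, a]" "\<sigma> ` famV [b, a] \<subseteq> famV [a, b]"
    using swap by (auto simp: famV_iff \<sigma>_def)
  ultimately have "bij_betw \<sigma> (famV [a, b]) (famV [b, a])"
    by (intro bij_betw_byWitness[where f' = \<sigma>]) auto
  moreover have "famE [a, b] x y \<longleftrightarrow> famE [b, a] (\<sigma> x) (\<sigma> y)"
    if "x \<in> famV [a, b]" "y \<in> famV [a, b]" for x y
  proof -
    have wf: "wf_gadget ([a, b] ! i)" "wf_gadget ([b, a] ! i)" if "i < 2" for i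
      using that assms by (auto simp: less_2_cases_iff)
    have "x = None \<or> (\<exists>i j. x = Some (i, j) \<and> i < 2)" "y = None \<or> (\<exists>i j. y = Some (i, j) \<and> i < 2)"
      using that by (auto simp: famV_iff)
    then show ?thesis
      using assms by (elim disjE exE conjE)
        (auto simp: \<sigma>_def famE_None_None famE_Some_Some famE_Some_None famE_None_Some wf less_2_cases_iff)
  qed
  ultimately show ?thesis
    unfolding graph_iso_def by blast
qed

lemma graph_iso_exceptional:
  assumes iso: "graph_iso V E (famV gs) (famE gs)"
    and gs: "gs \<in> {[Cyc 4, Pend 4 1], [Pend 4 1, Cyc 4], [Cyc 4, Cyc 5], [Cyc 5, Cyc 4]}"
  shows "graph_iso V E G4V G4E \<or> graph_iso V E G5V G5E"
proof -
  have wf: "wf_gadget (Cyc 4)" "wf_gadget (Pend 4 1)" "wf_gadget (Cyc 5)"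
    by (auto intro!: wf_gadget_D1_D2 simp: D1_def D2_def)
  have swapped: "graph_iso V E (famV [b, a]) (famE [b, a])" if "gs = [a, b]" "wf_gadget a" "wf_gadget b" for a b
    using graph_iso_trans[OF _ graph_iso_famV_swap[OF that(2,3)]] iso that(1) by simp
  show ?thesis
    using gs iso swapped wf unfolding G4V_def G4E_def G5V_def G5E_def by auto
qed

lemma disj_dom_graph_iso:
  assumes iso: "graph_iso V E V' E'" and dom': "disj_dom V' E' S'"
  shows "\<exists>S. disj_dom V E S \<and> card S = card S'"
proof -
  obtain f where f: "bij_betw f V V'" and fE: "\<forall>x\<in>V. \<forall>y\<in>V. E x y \<longleftrightarrow> E' (f x) (f y)"
    using iso unfolding graph_iso_def by blast
  have inj: "inj_on f V" and fV: "f ` V = V'"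
    using f by (auto simp: bij_betw_def)
  define S where "S = {x\<in>V. f x \<in> S'}"
  have SV: "S \<subseteq> V"
    unfolding S_def by blast
  have fS: "f ` S = S'"
    using dom' fV unfolding S_def disj_dom_def by auto
  have dist2: "dist2 V E u w \<longleftrightarrow> dist2 V' E' (f u) (f w)" if "u \<in> V" "w \<in> V" for u w
    using that fE fV inj_onD[OF inj] unfolding dist2_def by auto
  have "(\<exists>w\<in>S. E u w) \<or> 2 \<le> card {w\<in>S. dist2 V E u w}" if u: "u \<in> V - S" for u
  proof -
    have "f u \<in> V' - S'"
      using u fV unfolding S_def by auto
    then have "(\<exists>w'\<in>S'. E' (f u) w') \<or> 2 \<le> card {w'\<in>S'. dist2 V' E' (f u) w'}"
      using dom' unfolding disj_dom_def by blast
    moreover have "{w'\<in>S'. dist2 V' E' (f u) w'} = f ` {w\<in>S. dist2 V E u w}"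
      using u SV dist2 unfolding fS[symmetric] by auto
    moreover have "card (f ` {w\<in>S. dist2 V E u w}) = card {w\<in>S. dist2 V E u w}"
      using SV by (intro card_image inj_on_subset[OF inj]) auto
    moreover have "(\<exists>w'\<in>S'. E' (f u) w') \<longleftrightarrow> (\<exists>w\<in>S. E u w)"
      using u SV fE unfolding fS[symmetric] by blast
    ultimately show ?thesis
      by simp
  qed
  moreover have "card S = card S'"
    using fS card_image[OF inj_on_subset[OF inj SV]] by simp
  ultimately show ?thesis
    unfolding disj_dom_def using SV by blast
qed

lemma gamma_d2_le_card:
  assumes "finite V" "disj_dom V E S"
  shows "gamma_d2 V E \<le> card S"
proof -
  have "{card S | S. disj_dom V E S} \<subseteq> {..card V}"
    using assms(1) by (auto simp: disj_dom_def intro: card_mono)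
  then have "finite {card S | S. disj_dom V E S}"
    using finite_subset by blast
  then show ?thesis
    unfolding gamma_d2_def using assms(2) by (intro Min_le) auto
qed

theorem lemma2p4:
  fixes V :: "'a set" and E :: "'a \<Rightarrow> 'a \<Rightarrow> bool"
  assumes "in_famF V E"
    and "\<not> graph_iso V E G4V G4E"
    and "\<not> graph_iso V E G5V G5E"
  shows "real (gamma_d2 V E) \<le> real (card V) / 3"
proof -
  obtain gs where len: "2 \<le> length gs" and gs: "set gs \<subseteq> D1 \<union> D2"
    and iso: "graph_iso V E (famV gs) (famE gs)"
    using assms(1) unfolding in_famF_def by blast
  have "gs \<notin> {[Cyc 4, Pend 4 1], [Pend 4 1, Cyc 4], [Cyc 4, Cyc 5], [Cyc 5, Cyc 4]}"
    using graph_iso_exceptional[OF iso] assms(2,3) by blast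
  then obtain S' where S': "disj_dom (famV gs) (famE gs) S'" "3 * card S' \<le> card (famV gs)"
    using famV_disj_dom_card_le[OF len gs] by blast
  obtain S where S: "disj_dom V E S" "card S = card S'"
    using disj_dom_graph_iso[OF iso S'(1)] by blast
  obtain f where "bij_betw f V (famV gs)"
    using iso unfolding graph_iso_def by blast
  then have "finite V" "card V = card (famV gs)"
    using finite_famV bij_betw_finite bij_betw_same_card by blast+
  then have "3 * gamma_d2 V E \<le> card V"
    using gamma_d2_le_card[OF _ S(1)] S(2) S'(2) by linarith
  then show ?thesis
    by simp
qed

end
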